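(* Suppose $\mathrm{char}(\mathbb{F})=0$ and $h\in\mathbb{F}[x]$. Then $$hA_h=[x,A_h]=[\hat y,A_h]=[A_h,A_h].$$
   Context: For $h\in\mathbb{F}[x]$, $A_h$ is the unital associative $\mathbb{F}$-algebra generated by $x,\hat y$ with defining relation $\hat yx-x\hat y=h$. For $b\in A_h$, $[b,A_h]=\{ba-ab: a\in A_h\}$ (a linear subspace), and $[A_h,A_h]$ is the linear span of all commutators $ab-ba$, $a,b\in A_h$. $hA_h$ is the right ideal generated by $h$ (which is a two-sided ideal since $h$ is normal). *)

theory Defs
  imports "HOL-Computational_Algebra.Polynomial"
begin

text \<open>Model of A_h: by the PBW basis x^i y^j, A_h is the Ore extension F[x][y; delta]
  with delta = h * d/dx.  An element sum_j f_j(x) y^j (coefficients written on the left)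
  is represented by the polynomial in y with coefficients f_j in F[x], i.e. 'a poly poly.
  Multiplication is the Ore/Leibniz rule y^j g = sum_i (j choose i) delta^i(g) y^(j-i).\<close>

definition wdelta :: "'a::idom poly \<Rightarrow> 'a poly \<Rightarrow> 'a poly" where
  "wdelta h g = h * pderiv g"

definition amul :: "'a::idom poly \<Rightarrow> 'a poly poly \<Rightarrow> 'a poly poly \<Rightarrow> 'a poly poly" where
  "amul h a b = (\<Sum>j\<le>degree a. \<Sum>k\<le>degree b. \<Sum>i\<le>j.
      monom (of_nat (j choose i) * coeff a j * (wdelta h ^^ i) (coeff b k)) (j - i + k))"

definition Ax :: "'a::idom poly poly" where "Ax = [:[:0, 1:]:]"
definition Ay :: "'a::idom poly poly" where "Ay = monom 1 1"
definition Apoly :: "'a::idom poly \<Rightarrow> 'a poly poly" where "Apoly f = [:f:]"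

inductive_set comm_span :: "'a::idom poly \<Rightarrow> 'a poly poly set" for h where
  zero: "0 \<in> comm_span h"
| comm: "amul h a b - amul h b a \<in> comm_span h"
| add: "u \<in> comm_span h \<Longrightarrow> v \<in> comm_span h \<Longrightarrow> u + v \<in> comm_span h"
| smult: "u \<in> comm_span h \<Longrightarrow> smult [:c:] u \<in> comm_span h"

end

theory Submission
  imports Defs
begin

text \<open>Modulo h the Ore product is the commutative product in F[x][y], since every term
  involving delta^i with i > 0 is a multiple of h; hence every commutator lies in hA_h.
  Conversely [y, g y^n] = h g' y^n, and in characteristic 0 every polynomial is a
  derivative g', so [y, A_h] already contains hA_h. For x, [x, f y^(n+1)] equals
  -(n+1) h f y^n plus multiples of h of lower y-degree, and induction on the
  y-degree gives hA_h \<subseteq> [x, A_h]. Finally hA_h is the set of all products h a.\<close>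

definition coeffs_dvd :: "'a::idom poly \<Rightarrow> 'a poly poly \<Rightarrow> bool" where
  "coeffs_dvd h p \<longleftrightarrow> (\<forall>n. h dvd coeff p n)"

lemma coeffs_dvd_0 [simp]: "coeffs_dvd h 0"
  by (simp add: coeffs_dvd_def)

lemma coeffs_dvd_add: "coeffs_dvd h p \<Longrightarrow> coeffs_dvd h q \<Longrightarrow> coeffs_dvd h (p + q)"
  by (simp add: coeffs_dvd_def)

lemma coeffs_dvd_diff: "coeffs_dvd h p \<Longrightarrow> coeffs_dvd h q \<Longrightarrow> coeffs_dvd h (p - q)"
  by (simp add: coeffs_dvd_def)

lemma coeffs_dvd_smult: "coeffs_dvd h p \<Longrightarrow> coeffs_dvd h (smult c p)"
  by (simp add: coeffs_dvd_def)

lemma coeffs_dvd_monom: "h dvd c \<Longrightarrow> coeffs_dvd h (monom c n)"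
  by (simp add: coeffs_dvd_def)

lemma coeffs_dvd_sum: "(\<And>i. i \<in> A \<Longrightarrow> coeffs_dvd h (f i)) \<Longrightarrow> coeffs_dvd h (\<Sum>i\<in>A. f i)"
  by (induction A rule: infinite_finite_induct) (auto intro: coeffs_dvd_add)

lemma coeffs_dvd_iff_smult:
  fixes h :: "'a::field poly"
  shows "coeffs_dvd h p \<longleftrightarrow> (\<exists>a. p = smult h a)"
proof
  assume "coeffs_dvd h p"
  then have "p = smult h (map_poly (\<lambda>c. c div h) p)"
    by (intro poly_eqI) (simp add: coeff_map_poly coeffs_dvd_def)
  then show "\<exists>a. p = smult h a" ..
qed (auto simp: coeffs_dvd_def)

lemma wdelta_power_0 [simp]: "(wdelta h ^^ i) 0 = 0"
  by (induction i) (auto simp: wdelta_def)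

lemma wdelta_power_add: "(wdelta h ^^ i) (p + q) = (wdelta h ^^ i) p + (wdelta h ^^ i) q"
  by (induction i) (auto simp: wdelta_def pderiv_add distrib_left)

lemma wdelta_power_1: "(wdelta h ^^ i) 1 = (if i = 0 then 1 else 0)"
  by (induction i) (auto simp: wdelta_def)

lemma dvd_wdelta_power: "i \<noteq> 0 \<Longrightarrow> h dvd (wdelta h ^^ i) g"
  by (cases i) (auto simp: wdelta_def)

text \<open>The defining sum of \<^const>\<open>amul\<close> with its ranges widened to arbitrary degree bounds,
  so that products with different factors can be compared termwise.\<close>

definition amul_upto :: "'a::idom poly \<Rightarrow> nat \<Rightarrow> nat \<Rightarrow> 'a poly poly \<Rightarrow> 'a poly poly \<Rightarrow> 'a poly poly"
  where "amul_upto h N M a b = (\<Sum>j\<le>N. \<Sum>k\<le>M. \<Sum>i\<le>j.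
      monom (of_nat (j choose i) * coeff a j * (wdelta h ^^ i) (coeff b k)) (j - i + k))"

lemma amul_eq_amul_upto:
  assumes "degree a \<le> N" "degree b \<le> M"
  shows "amul h a b = amul_upto h N M a b"
proof -
  have "amul_upto h N M a b = (\<Sum>j\<le>degree a. \<Sum>k\<le>M. \<Sum>i\<le>j.
      monom (of_nat (j choose i) * coeff a j * (wdelta h ^^ i) (coeff b k)) (j - i + k))"
    unfolding amul_upto_def
    by (rule sum.mono_neutral_right) (use assms in \<open>auto simp: coeff_eq_0\<close>)
  also have "\<dots> = amul h a b"
    unfolding amul_def
    by (intro sum.cong refl sum.mono_neutral_right) (use assms in \<open>auto simp: coeff_eq_0\<close>)
  finally show ?thesis by simp
qed

lemma amul_add_left: "amul h (a + b) c = amul h a c + amul h b c"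
proof -
  let ?N = "max (degree a) (degree b)"
  have "degree (a + b) \<le> ?N"
    by (rule degree_add_le) auto
  then have "amul h (a + b) c = amul_upto h ?N (degree c) (a + b) c"
    by (rule amul_eq_amul_upto) simp
  moreover have "amul h a c = amul_upto h ?N (degree c) a c"
    and "amul h b c = amul_upto h ?N (degree c) b c"
    by (rule amul_eq_amul_upto; simp)+
  ultimately show ?thesis
    by (simp add: amul_upto_def distrib_left distrib_right sum.distrib add_monom[symmetric])
qed

lemma amul_add_right: "amul h a (b + c) = amul h a b + amul h a c"
proof -
  let ?N = "max (degree b) (degree c)"
  have "degree (b + c) \<le> ?N"
    by (rule degree_add_le) auto
  then have "amul h a (b + c) = amul_upto h (degree a) ?N a (b + c)"
    by (rule amul_eq_amul_upto[rotated]) simp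
  moreover have "amul h a b = amul_upto h (degree a) ?N a b"
    and "amul h a c = amul_upto h (degree a) ?N a c"
    by (rule amul_eq_amul_upto; simp)+
  ultimately show ?thesis
    by (simp add: amul_upto_def wdelta_power_add distrib_left distrib_right sum.distrib
        add_monom[symmetric])
qed

lemma amul_monom_monom:
  "amul h (monom c j) (monom d k) =
     (\<Sum>i\<le>j. monom (of_nat (j choose i) * c * (wdelta h ^^ i) d) (j - i + k))"
proof -
  have "amul h (monom c j) (monom d k) = amul_upto h j k (monom c j) (monom d k)"
    by (rule amul_eq_amul_upto) (auto simp: degree_monom_le)
  also have "\<dots> = (\<Sum>j'\<le>j. if j' = j then (\<Sum>k'\<le>k. if k' = k then (\<Sum>i\<le>j.
      monom (of_nat (j choose i) * c * (wdelta h ^^ i) d) (j - i + k)) else 0) else 0)"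
    unfolding amul_upto_def
  proof (intro sum.cong refl)
    fix j'
    have "(\<Sum>i\<le>j. monom (of_nat (j choose i) * c * (wdelta h ^^ i) (coeff (monom d k) k'))
        (j - i + k')) = (if k' = k then (\<Sum>i\<le>j.
        monom (of_nat (j choose i) * c * (wdelta h ^^ i) d) (j - i + k)) else 0)" for k'
      by auto
    then show "(\<Sum>k'\<le>k. \<Sum>i\<le>j'. monom (of_nat (j' choose i) * coeff (monom c j) j' *
        (wdelta h ^^ i) (coeff (monom d k) k')) (j' - i + k')) =
      (if j' = j then \<Sum>k'\<le>k. if k' = k then \<Sum>i\<le>j.
        monom (of_nat (j choose i) * c * (wdelta h ^^ i) d) (j - i + k) else 0 else 0)"
      by (cases "j' = j") auto
  qed
  finally show ?thesis
    by simp
qed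

lemma mult_eq_sum_monom_monom:
  "a * b = (\<Sum>j\<le>degree a. \<Sum>k\<le>degree b. monom (coeff a j * coeff b k) (j + k))"
proof -
  have "a * b = (\<Sum>j\<le>degree a. monom (coeff a j) j) * (\<Sum>k\<le>degree b. monom (coeff b k) k)"
    by (simp add: poly_as_sum_of_monoms)
  then show ?thesis
    by (simp add: sum_product mult_monom)
qed

lemma coeffs_dvd_amul_minus_mult: "coeffs_dvd h (amul h a b - a * b)"
proof -
  have "amul h a b - a * b = (\<Sum>j\<le>degree a. \<Sum>k\<le>degree b. \<Sum>i\<in>{..j} - {0}.
      monom (of_nat (j choose i) * coeff a j * (wdelta h ^^ i) (coeff b k)) (j - i + k))"
    unfolding amul_def mult_eq_sum_monom_monom[of a b] sum_subtractf[symmetric]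
    by (intro sum.cong refl) (simp add: sum.remove[of "{.._}" 0])
  also have "coeffs_dvd h \<dots>"
    by (intro coeffs_dvd_sum coeffs_dvd_monom) (auto intro: dvd_mult dvd_wdelta_power)
  finally show ?thesis .
qed

lemma coeffs_dvd_commutator: "coeffs_dvd h (amul h a b - amul h b a)"
proof -
  have "amul h a b - amul h b a = (amul h a b - a * b) - (amul h b a - b * a)"
    by (simp add: mult.commute)
  then show ?thesis
    by (metis coeffs_dvd_diff coeffs_dvd_amul_minus_mult)
qed

lemma amul_0_left [simp]: "amul h 0 b = 0"
  by (simp add: amul_def)

lemma amul_0_right [simp]: "amul h a 0 = 0"
  by (simp add: amul_def)

definition commutators_with :: "'a::idom poly \<Rightarrow> 'a poly poly \<Rightarrow> 'a poly poly set" where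
  "commutators_with h b = {amul h b a - amul h a b | a. True}"

lemma commutators_with_0: "0 \<in> commutators_with h b"
  unfolding commutators_with_def by (rule CollectI, rule exI[of _ 0]) simp

lemma commutators_with_add:
  assumes "p \<in> commutators_with h b" "q \<in> commutators_with h b"
  shows "p + q \<in> commutators_with h b"
proof -
  obtain a1 a2 where "p = amul h b a1 - amul h a1 b" "q = amul h b a2 - amul h a2 b"
    using assms unfolding commutators_with_def by blast
  then have "p + q = amul h b (a1 + a2) - amul h (a1 + a2) b"
    by (simp add: amul_add_left amul_add_right)
  then show ?thesis
    unfolding commutators_with_def by blast
qed

lemma commutators_with_sum:
  "(\<And>i. i \<in> A \<Longrightarrow> f i \<in> commutators_with h b) \<Longrightarrow> (\<Sum>i\<in>A. f i) \<in> commutators_with h b"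
  by (induction A rule: infinite_finite_induct) (auto intro: commutators_with_add commutators_with_0)

lemma coeffs_dvd_if_commutators_with: "p \<in> commutators_with h b \<Longrightarrow> coeffs_dvd h p"
  unfolding commutators_with_def using coeffs_dvd_commutator by blast

lemma commutators_with_if_monoms:
  assumes "\<And>c n. h dvd c \<Longrightarrow> monom c n \<in> commutators_with h b" and "coeffs_dvd h p"
  shows "p \<in> commutators_with h b"
proof -
  have "(\<Sum>i\<le>degree p. monom (coeff p i) i) \<in> commutators_with h b"
    using assms by (intro commutators_with_sum) (auto simp: coeffs_dvd_def)
  then show ?thesis
    by (simp add: poly_as_sum_of_monoms)
qed

lemma pderiv_surj: "\<exists>G. pderiv G = (g :: 'a::field_char_0 poly)"
proof -
  have "pderiv (\<Sum>n\<le>degree g. monom (coeff g n / of_nat (Suc n)) (Suc n))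
      = (\<Sum>n\<le>degree g. pderiv (monom (coeff g n / of_nat (Suc n)) (Suc n)))"
    using higher_pderiv_sum[of 1] by simp
  also have "\<dots> = (\<Sum>n\<le>degree g. monom (coeff g n) n)"
    by (intro sum.cong refl) (simp add: pderiv_monom del: of_nat_Suc)
  also have "\<dots> = g"
    by (simp add: poly_as_sum_of_monoms)
  finally show ?thesis by blast
qed

lemma commutator_Ay_monom: "amul h Ay (monom G n) - amul h (monom G n) Ay = monom (h * pderiv G) n"
proof -
  have "amul h Ay (monom G n) = monom G (Suc n) + monom (h * pderiv G) n"
    unfolding Ay_def amul_monom_monom by (simp add: wdelta_def)
  moreover have "amul h (monom G n) Ay = (\<Sum>i\<le>n. if i = 0 then monom G (Suc n) else 0)"
    unfolding Ay_def amul_monom_monom by (intro sum.cong refl) (simp add: wdelta_power_1)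
  ultimately show ?thesis
    by simp
qed

lemma commutators_with_Ay_if_coeffs_dvd:
  fixes h :: "'a::field_char_0 poly"
  assumes "coeffs_dvd h p"
  shows "p \<in> commutators_with h Ay"
proof (rule commutators_with_if_monoms[OF _ assms])
  fix c n
  assume "h dvd c"
  then obtain g where g: "c = h * g" ..
  obtain G where "pderiv G = g"
    using pderiv_surj by blast
  then have "monom c n = amul h Ay (monom G n) - amul h (monom G n) Ay"
    by (simp add: commutator_Ay_monom g)
  then show "monom c n \<in> commutators_with h Ay"
    unfolding commutators_with_def by blast
qed

lemma commutator_Ax_monom:
  "amul h Ax (monom f m) - amul h (monom f m) Ax =
     - (\<Sum>i\<in>{1..m}. monom (of_nat (m choose i) * f * (wdelta h ^^ i) [:0, 1:]) (m - i))"
proof -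
  have Ax: "Ax = monom [:0, 1:] 0"
    by (simp add: Ax_def monom_0)
  have "amul h Ax (monom f m) = monom (f * [:0, 1:]) m"
    unfolding Ax amul_monom_monom by (simp add: mult.commute)
  moreover have "{..m} = insert 0 {1..m}"
    by auto
  then have "amul h (monom f m) Ax = monom (f * [:0, 1:]) m +
      (\<Sum>i\<in>{1..m}. monom (of_nat (m choose i) * f * (wdelta h ^^ i) [:0, 1:]) (m - i))"
    unfolding Ax amul_monom_monom by simp
  ultimately show ?thesis
    by simp
qed

lemma monom_in_commutators_with_Ax:
  fixes h :: "'a::field_char_0 poly"
  assumes "h dvd c"
  shows "monom c n \<in> commutators_with h Ax"
  using assms
proof (induction n arbitrary: c rule: less_induct)
  case (less n)
  obtain g where g: "c = h * g"
    using less.prems ..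
  \<comment> \<open>f is chosen so that the leading term T 1 of [x, f y^(n+1)] is exactly -c y^n\<close>
  define f where "f = smult (- 1 / of_nat (Suc n)) g"
  define T where "T i = monom (of_nat (Suc n choose i) * f * (wdelta h ^^ i) [:0, 1:]) (Suc n - i)"
    for i
  have "{1..Suc n} = insert 1 {2..Suc n}"
    by auto
  then have comm: "amul h Ax (monom f (Suc n)) - amul h (monom f (Suc n)) Ax =
      - (T 1 + (\<Sum>i\<in>{2..Suc n}. T i))"
    unfolding commutator_Ax_monom T_def by simp
  have cancel: "smult (1 / of_nat (Suc n)) (of_nat (Suc n) * q) = q" for q :: "'a poly"
    by (simp add: of_nat_poly del: of_nat_Suc)
  have "T 1 = - monom c n"
    using cancel[of "g * h"] unfolding T_def f_def g
    by (simp add: wdelta_def pderiv_pCons minus_monom mult_ac del: of_nat_Suc)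
  with comm have eq: "monom c n = (amul h Ax (monom f (Suc n)) - amul h (monom f (Suc n)) Ax)
      + (\<Sum>i\<in>{2..Suc n}. T i)"
    by (simp add: algebra_simps)
  have "(\<Sum>i\<in>{2..Suc n}. T i) \<in> commutators_with h Ax"
  proof (rule commutators_with_sum)
    fix i
    assume i: "i \<in> {2..Suc n}"
    then have "h dvd of_nat (Suc n choose i) * f * (wdelta h ^^ i) [:0, 1:]"
      by (intro dvd_mult dvd_wdelta_power) auto
    moreover have "Suc n - i < n"
      using i by auto
    ultimately show "T i \<in> commutators_with h Ax"
      unfolding T_def using less.IH by blast
  qed
  moreover have "amul h Ax (monom f (Suc n)) - amul h (monom f (Suc n)) Ax \<in> commutators_with h Ax"
    unfolding commutators_with_def by blast
  ultimately show ?case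
    using eq commutators_with_add by metis
qed

lemma commutators_with_Ax_if_coeffs_dvd:
  fixes h :: "'a::field_char_0 poly"
  shows "coeffs_dvd h p \<Longrightarrow> p \<in> commutators_with h Ax"
  by (rule commutators_with_if_monoms) (rule monom_in_commutators_with_Ax)

lemma commutators_with_Ax_eq:
  fixes h :: "'a::field_char_0 poly"
  shows "commutators_with h Ax = {p. coeffs_dvd h p}"
  using commutators_with_Ax_if_coeffs_dvd coeffs_dvd_if_commutators_with by blast

lemma commutators_with_Ay_eq:
  fixes h :: "'a::field_char_0 poly"
  shows "commutators_with h Ay = {p. coeffs_dvd h p}"
  using commutators_with_Ay_if_coeffs_dvd coeffs_dvd_if_commutators_with by blast

lemma coeffs_dvd_if_comm_span: "p \<in> comm_span h \<Longrightarrow> coeffs_dvd h p"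
  by (induction rule: comm_span.induct)
    (auto intro: coeffs_dvd_add coeffs_dvd_smult coeffs_dvd_commutator)

lemma comm_span_eq:
  fixes h :: "'a::field_char_0 poly"
  shows "comm_span h = {p. coeffs_dvd h p}"
proof (intro set_eqI iffI)
  fix p
  assume "p \<in> {p. coeffs_dvd h p}"
  then have "p \<in> commutators_with h Ay"
    by (simp add: commutators_with_Ay_eq)
  then show "p \<in> comm_span h"
    unfolding commutators_with_def by (auto intro: comm_span.comm)
qed (simp add: coeffs_dvd_if_comm_span)

lemma amul_Apoly: "amul h (Apoly f) a = smult f a"
proof (rule poly_eqI)
  fix n
  have "coeff (amul h (Apoly f) a) n = (\<Sum>k\<le>degree a. if k = n then f * coeff a k else 0)"
    unfolding amul_def Apoly_def by (simp add: coeff_sum)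
  also have "\<dots> = f * coeff a n"
    by (auto simp: coeff_eq_0)
  finally show "coeff (amul h (Apoly f) a) n = coeff (smult f a) n"
    by simp
qed

lemma left_multiples_Apoly_eq:
  fixes h :: "'a::field poly"
  shows "{amul h (Apoly h) a | a. True} = {p. coeffs_dvd h p}"
  by (auto simp: amul_Apoly coeffs_dvd_iff_smult)

theorem proposition6p2:
  fixes h :: "'a::field_char_0 poly"
  shows "{amul h (Apoly h) a | a. True} = {amul h Ax a - amul h a Ax | a. True}
       \<and> {amul h Ax a - amul h a Ax | a. True} = {amul h Ay a - amul h a Ay | a. True}
       \<and> {amul h Ay a - amul h a Ay | a. True} = comm_span h"
  using left_multiples_Apoly_eq[of h] commutators_with_Ax_eq[of h] commutators_with_Ay_eq[of h]
    comm_span_eq[of h]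
  unfolding commutators_with_def by simp

end
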